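(* Let $b>\frac12$. There is $C>0$ such that for all $k\in\mathbb{Z}$ and all $u,v\in X^{0,b}$: \[ \|I_x^{1/2}I_{x,-}^{1/2}(P_{y,k}u,v)\|_{L^2_{t,x,y}}\le C\,2^{k/2}\|u\|_{0,b}\|v\|_{0,b}, \] \[ \|I_x^{1/2}I_{x,-}^{1/2}(u,P_{y,k}v)\|_{L^2_{t,x,y}}\le C\,2^{k/2}\|u\|_{0,b}\|v\|_{0,b}, \] \[ \|P_{y,k}I_x^{1/2}I_{x,-}^{1/2}(u,v)\|_{L^2_{t,x,y}}\le C\,2^{k/2}\|u\|_{0,b}\|v\|_{0,b}. \]
   Context: Notation: $\langle a\rangle=(1+|a|^2)^{1/2}$; $(\tau,\xi,\eta)$ are the Fourier variables dual to $(t,x,y)$, $\widehat u$ is the space-time Fourier transform. $X^{s,b}$ is the space of tempered distributions $u$ on $\mathbb{R}\times\mathbb{R}^2$ with $\widehat u\in L^2_{loc}$ and $\|u\|_{s,b}=\|\langle\tau-\xi^3-\eta^3\rangle^b\langle(\xi,\eta)\rangle^s\widehat u\|_{L^2_{\tau\xi\eta}}<\infty$. $I_x^{1/2}$ is the Fourier multiplier with symbol $|\xi|^{1/2}$ (in the spatial variable $x$). $P_{y,k}$ is the Fourier multiplier with symbol $\chi_{\{|\eta|\le2^k\}}$ (sharp cutoff). $I_{x,-}^{1/2}$ is the bilinear operator acting in the space variables (for each fixed $t$) by \[ \mathcal F_{x,y}\big(I_{x,-}^{1/2}(f_1,f_2)\big)(\xi,\eta)=\int_{\xi_1+\xi_2=\xi,\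 \eta_1+\eta_2=\eta}|\xi_1-\xi_2|^{1/2}\widehat{f_1}(\xi_1,\eta_1)\widehat{f_2}(\xi_2,\eta_2)\,d\xi_1d\eta_1 ; \] equivalently, in space-time Fourier variables, $\mathcal F\big(I_x^{1/2}I_{x,-}^{1/2}(u,v)\big)(\tau,\xi,\eta)=\int|\xi|^{1/2}|\xi_1-\xi_2|^{1/2}\widehat u(\tau_1,\xi_1,\eta_1)\widehat v(\tau-\tau_1,\xi-\xi_1,\eta-\eta_1)\,d\tau_1d\xi_1d\eta_1$ with $\xi_2=\xi-\xi_1$. *)

theory Defs
  imports "HOL-Analysis.Analysis"
begin

text \<open>Everything is expressed on the space-time Fourier side. A point of
  frequency space is w = (tau, xi, eta) :: real \<times> real \<times> real, and a space-time
  function u is represented by its Fourier transform f = u-hat.\<close>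

definition japanese :: "real \<Rightarrow> real" where
  "japanese a = sqrt (1 + a\<^sup>2)"

definition kdv_sym :: "real \<times> real \<times> real \<Rightarrow> real" where
  "kdv_sym w = fst w - (fst (snd w))^3 - (snd (snd w))^3"

definition Xsb_norm_sq :: "real \<Rightarrow> (real \<times> real \<times> real \<Rightarrow> complex) \<Rightarrow> ennreal" where
  "Xsb_norm_sq b f =
     (\<integral>\<^sup>+ w. ennreal ((japanese (kdv_sym w) powr b)\<^sup>2 * (cmod (f w))\<^sup>2) \<partial>lborel)"

definition in_X0b :: "real \<Rightarrow> (real \<times> real \<times> real \<Rightarrow> complex) \<Rightarrow> bool" where
  "in_X0b b f \<longleftrightarrow> f \<in> borel_measurable lborel \<and> Xsb_norm_sq b f < \<infinity>"

definition Xsb_norm :: "real \<Rightarrow> (real \<times> real \<times> real \<Rightarrow> complex) \<Rightarrow> real" where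
  "Xsb_norm b f = sqrt (enn2real (Xsb_norm_sq b f))"

text \<open>Fourier side of P_{y,k}: sharp cutoff |eta| \<le> 2^k.\<close>
definition Py :: "int \<Rightarrow> (real \<times> real \<times> real \<Rightarrow> complex) \<Rightarrow> (real \<times> real \<times> real \<Rightarrow> complex)" where
  "Py k f = (\<lambda>w. if \<bar>snd (snd w)\<bar> \<le> 2 powr (real_of_int k) then f w else 0)"

text \<open>Integrand of the Fourier transform of I_x^{1/2} I_{x,-}^{1/2}(u,v) at w,
  integrated over w1 = (tau1, xi1, eta1); here xi2 = xi - xi1.\<close>
definition bil_integrand ::
  "(real \<times> real \<times> real \<Rightarrow> complex) \<Rightarrow> (real \<times> real \<times> real \<Rightarrow> complex) \<Rightarrow>
   real \<times> real \<times> real \<Rightarrow> real \<times> real \<times> real \<Rightarrow> complex" where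
  "bil_integrand f g w w1 =
     complex_of_real (sqrt \<bar>fst (snd w)\<bar> *
        sqrt \<bar>fst (snd w1) - (fst (snd w) - fst (snd w1))\<bar>) * f w1 * g (w - w1)"

text \<open>Fourier transform of I_x^{1/2} I_{x,-}^{1/2}(u,v), given f = u-hat, g = v-hat.\<close>
definition bil :: "(real \<times> real \<times> real \<Rightarrow> complex) \<Rightarrow> (real \<times> real \<times> real \<Rightarrow> complex) \<Rightarrow>
   real \<times> real \<times> real \<Rightarrow> complex" where
  "bil f g = (\<lambda>w. \<integral> w1. bil_integrand f g w w1 \<partial>lborel)"

definition bil_defined :: "(real \<times> real \<times> real \<Rightarrow> complex) \<Rightarrow> (real \<times> real \<times> real \<Rightarrow> complex) \<Rightarrow> bool" where
  "bil_defined f g \<longleftrightarrow> (AE w in lborel. integrable lborel (bil_integrand f g w))"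

text \<open>Square of the L2 norm (by Plancherel, the L2_{t,x,y} norm up to a fixed constant).\<close>
definition L2_norm_sq :: "(real \<times> real \<times> real \<Rightarrow> complex) \<Rightarrow> ennreal" where
  "L2_norm_sq F = (\<integral>\<^sup>+ w. ennreal ((cmod (F w))\<^sup>2) \<partial>lborel)"

end

theory Submission
  imports Defs
begin

(* On the Fourier side the integrand of bil f g has modulus K(w,w1) F(w1) G(w - w1), where
   F = <sigma>^b |f|, G = <sigma>^b |g| are the X^{0,b} densities and
   K^2 = |xi| |2 xi1 - xi| <sigma1>^(-2b) <sigma2>^(-2b).  The resonance xi1^3 + (xi - xi1)^3 is a
   quadratic in xi1 - xi/2 with leading coefficient 3 xi, so for every fixed eta1 the integral of K^2
   over (tau1, xi1) is at most 2/3 (Int <s>^(-2b) ds)^2, which is finite for b > 1/2.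
   Cauchy-Schwarz in w1, keeping the frequency cutoff on the kernel side, then gives the two bounds
   with P_{y,k} on an input: integrating the cutoff over eta1 produces the factor 2^(k+1).
   For P_{y,k} on the output one weights the Cauchy-Schwarz splitting by the slice mass
   a(eta1) = Int Int F(tau1, xi1, eta1)^2: the kernel side is then bounded by ||F||^2, and the
   remaining double integral over |eta| <= 2^k by 2^(k+1) ||G||^2. *)

section \<open>Lebesgue integrals on products of Euclidean spaces\<close>

text \<open>The measurability prover does not identify borel on a product type with the product of the
  borel measures, so the projections have to be registered for borel directly.\<close>

lemma borel_measurable_fst' [measurable]:
  "(fst :: 'a::euclidean_space \<times> 'b::euclidean_space \<Rightarrow> 'a) \<in> borel_measurable borel"
  by (intro borel_measurable_continuous_onI continuous_intros)

lemma borel_measurable_snd' [measurable]: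
  "(snd :: 'a::euclidean_space \<times> 'b::euclidean_space \<Rightarrow> 'b) \<in> borel_measurable borel"
  by (intro borel_measurable_continuous_onI continuous_intros)

lemma borel_measurable_nn_integral_lborel [measurable (raw)]:
  fixes f :: "'a::euclidean_space \<Rightarrow> 'b::euclidean_space \<Rightarrow> ennreal"
  assumes "case_prod f \<in> borel_measurable borel"
  shows "(\<lambda>x. \<integral>\<^sup>+y. f x y \<partial>lborel) \<in> borel_measurable borel"
  using lborel.borel_measurable_nn_integral_fst[of "case_prod f" lborel] assms by (simp add: lborel_prod)

lemma nn_integral_lborel_pair:
  fixes f :: "'a::euclidean_space \<times> 'b::euclidean_space \<Rightarrow> ennreal"
  assumes "f \<in> borel_measurable borel"
  shows "(\<integral>\<^sup>+z. f z \<partial>lborel) = (\<integral>\<^sup>+x. \<integral>\<^sup>+y. f (x, y) \<partial>lborel \<partial>lborel)"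
  using lborel.nn_integral_fst[of f lborel] assms by (simp add: lborel_prod)

lemma nn_integral_lborel_swap:
  fixes f :: "'a::euclidean_space \<Rightarrow> 'b::euclidean_space \<Rightarrow> ennreal"
  assumes "case_prod f \<in> borel_measurable borel"
  shows "(\<integral>\<^sup>+x. \<integral>\<^sup>+y. f x y \<partial>lborel \<partial>lborel) = (\<integral>\<^sup>+y. \<integral>\<^sup>+x. f x y \<partial>lborel \<partial>lborel)"
  using lborel_pair.Fubini'[of f] assms by (simp add: lborel_prod)

lemma nn_integral_lborel_translate:
  fixes h :: "'a::euclidean_space \<Rightarrow> ennreal"
  assumes [measurable]: "h \<in> borel_measurable borel"
  shows "(\<integral>\<^sup>+x. h (x - c) \<partial>lborel) = (\<integral>\<^sup>+x. h x \<partial>lborel)"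
proof -
  have "(\<integral>\<^sup>+x. h x \<partial>distr lborel borel ((+) (- c))) = (\<integral>\<^sup>+x. h (x - c) \<partial>lborel)"
    by (subst nn_integral_distr) auto
  then show ?thesis
    by (simp add: lborel_distr_plus)
qed

lemma nn_integral_lborel_shear:
  fixes h :: "'a::euclidean_space \<Rightarrow> 'a \<Rightarrow> ennreal"
  assumes [measurable]: "case_prod h \<in> borel_measurable borel"
  shows "(\<integral>\<^sup>+x. \<integral>\<^sup>+y. h y (x - y) \<partial>lborel \<partial>lborel) = (\<integral>\<^sup>+y. \<integral>\<^sup>+z. h y z \<partial>lborel \<partial>lborel)"
proof -
  have "(\<lambda>p. case_prod h (snd p, fst p - snd p)) \<in> borel_measurable borel"
    by (rule measurable_compose[OF _ assms]) measurable
  then have "(\<integral>\<^sup>+x. \<integral>\<^sup>+y. h y (x - y) \<partial>lborel \<partial>lborel) = (\<integral>\<^sup>+y. \<integral>\<^sup>+x. h y (x - y) \<partial>lborel \<partial>lborel)"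
    by (intro nn_integral_lborel_swap) (simp add: case_prod_beta')
  also have "\<dots> = (\<integral>\<^sup>+y. \<integral>\<^sup>+z. h y z \<partial>lborel \<partial>lborel)"
  proof (rule nn_integral_cong)
    fix y
    have "(\<lambda>z. case_prod h (y, z)) \<in> borel_measurable borel"
      by (rule measurable_compose[OF _ assms]) measurable
    then show "(\<integral>\<^sup>+x. h y (x - y) \<partial>lborel) = (\<integral>\<^sup>+z. h y z \<partial>lborel)"
      by (intro nn_integral_lborel_translate) simp
  qed
  finally show ?thesis .
qed

lemma nn_integral_convolution_lborel:
  fixes u v :: "'a::euclidean_space \<Rightarrow> ennreal"
  assumes [measurable]: "u \<in> borel_measurable borel" "v \<in> borel_measurable borel"
  shows "(\<integral>\<^sup>+x. \<integral>\<^sup>+y. u y * v (x - y) \<partial>lborel \<partial>lborel)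
    = (\<integral>\<^sup>+y. u y \<partial>lborel) * (\<integral>\<^sup>+x. v x \<partial>lborel)"
proof -
  have "(\<integral>\<^sup>+x. \<integral>\<^sup>+y. u y * v (x - y) \<partial>lborel \<partial>lborel) = (\<integral>\<^sup>+y. \<integral>\<^sup>+z. u y * v z \<partial>lborel \<partial>lborel)"
    by (rule nn_integral_lborel_shear[of "\<lambda>y z. u y * v z"]) measurable
  also have "\<dots> = (\<integral>\<^sup>+y. u y \<partial>lborel) * (\<integral>\<^sup>+x. v x \<partial>lborel)"
    by (simp add: nn_integral_cmult nn_integral_multc)
  finally show ?thesis .
qed

lemma nn_integral_lborel_triple:
  fixes h :: "real \<times> real \<times> real \<Rightarrow> ennreal"
  assumes [measurable]: "h \<in> borel_measurable borel"
  shows "(\<integral>\<^sup>+w. h w \<partial>lborel) = (\<integral>\<^sup>+e. \<integral>\<^sup>+x. \<integral>\<^sup>+t. h (t, x, e) \<partial>lborel \<partial>lborel \<partial>lborel)"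
proof -
  have "(\<integral>\<^sup>+w. h w \<partial>lborel) = (\<integral>\<^sup>+t. \<integral>\<^sup>+p. h (t, p) \<partial>lborel \<partial>lborel)"
    by (rule nn_integral_lborel_pair) simp
  also have "\<dots> = (\<integral>\<^sup>+p. \<integral>\<^sup>+t. h (t, p) \<partial>lborel \<partial>lborel)"
    by (rule nn_integral_lborel_swap) simp
  also have "\<dots> = (\<integral>\<^sup>+x. \<integral>\<^sup>+e. \<integral>\<^sup>+t. h (t, x, e) \<partial>lborel \<partial>lborel \<partial>lborel)"
    by (rule nn_integral_lborel_pair) measurable
  also have "\<dots> = (\<integral>\<^sup>+e. \<integral>\<^sup>+x. \<integral>\<^sup>+t. h (t, x, e) \<partial>lborel \<partial>lborel \<partial>lborel)"
    by (rule nn_integral_lborel_swap) measurable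
  finally show ?thesis .
qed

lemma nn_integral_indicator_interval:
  fixes R c :: real
  assumes "0 \<le> R"
  shows "(\<integral>\<^sup>+e. indicator {-R..R} (e + c) \<partial>lborel) = ennreal (2 * R)"
    and "(\<integral>\<^sup>+e. ennreal ((indicator {-R..R} e)\<^sup>2) \<partial>lborel) = ennreal (2 * R)"
    and "(\<integral>\<^sup>+e. ennreal ((indicator {-R..R} (c - e))\<^sup>2) \<partial>lborel) = ennreal (2 * R)"
proof -
  have "(\<lambda>e. indicator {-R..R} (e + c)) = (indicator {-R-c..R-c} :: real \<Rightarrow> ennreal)"
    and "(\<lambda>e. ennreal ((indicator {-R..R} e)\<^sup>2)) = indicator {-R..R}"
    and "(\<lambda>e. ennreal ((indicator {-R..R} (c - e))\<^sup>2)) = indicator {c-R..c+R}"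
    by (auto simp: indicator_def fun_eq_iff)
  with assms show "(\<integral>\<^sup>+e. indicator {-R..R} (e + c) \<partial>lborel) = ennreal (2 * R)"
    and "(\<integral>\<^sup>+e. ennreal ((indicator {-R..R} e)\<^sup>2) \<partial>lborel) = ennreal (2 * R)"
    and "(\<integral>\<^sup>+e. ennreal ((indicator {-R..R} (c - e))\<^sup>2) \<partial>lborel) = ennreal (2 * R)"
    by simp_all
qed

section \<open>The weight (1 + s^2) powr (-b)\<close>

definition japanese_weight :: "real \<Rightarrow> real \<Rightarrow> real" where
  "japanese_weight b s = (1 + s\<^sup>2) powr (-b)"

lemma japanese_weight_nonneg: "0 \<le> japanese_weight b s"
  by (simp add: japanese_weight_def)

lemma japanese_weight_le_1:
  assumes "0 \<le> b"
  shows "japanese_weight b s \<le> 1"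
proof -
  have "1 \<le> (1 + s\<^sup>2) powr b"
    using assms by (intro ge_one_powr_ge_zero) auto
  then show ?thesis
    unfolding japanese_weight_def by (simp add: powr_minus_divide divide_le_eq_1)
qed

lemma japanese_weight_le_abs_powr:
  assumes "0 \<le> b" "1 \<le> \<bar>s\<bar>"
  shows "japanese_weight b s \<le> \<bar>s\<bar> powr (-2 * b)"
proof -
  have "japanese_weight b s \<le> (s\<^sup>2) powr (-b)"
    unfolding japanese_weight_def using assms by (intro powr_mono2') auto
  also have "(s\<^sup>2) powr (-b) = (\<bar>s\<bar> powr 2) powr (-b)"
    by (simp add: powr_numeral)
  also have "\<dots> = \<bar>s\<bar> powr (-2 * b)"
    by (subst powr_powr) simp
  finally show ?thesis .
qed

lemma continuous_on_japanese_weight [continuous_intros]: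
  "continuous_on A f \<Longrightarrow> continuous_on A (\<lambda>x. japanese_weight b (f x))"
  unfolding japanese_weight_def
  by (intro continuous_intros) (auto simp: add_nonneg_eq_0_iff)

lemma borel_measurable_japanese_weight [measurable]:
  "japanese_weight b \<in> borel_measurable borel"
  by (intro borel_measurable_continuous_onI continuous_intros continuous_on_id)

lemma sqrt_japanese_weight_mult_japanese_powr:
  "sqrt (japanese_weight b s) * japanese s powr b = 1"
proof -
  have pos: "0 < 1 + s\<^sup>2"
    by (simp add: add_pos_nonneg)
  have "sqrt (japanese_weight b s) = (1 + s\<^sup>2) powr (-b/2)"
    unfolding japanese_weight_def by (simp add: powr_half_sqrt[symmetric] powr_powr)
  moreover have "japanese s powr b = (1 + s\<^sup>2) powr (b/2)"
    unfolding japanese_def using pos by (simp add: powr_half_sqrt[symmetric] powr_powr)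
  ultimately show ?thesis
    using pos by (simp add: powr_add[symmetric])
qed

lemma nn_integral_japanese_weight_finite:
  assumes "b > 1/2"
  shows "(\<integral>\<^sup>+s. japanese_weight b s \<partial>lborel) < \<infinity>"
proof -
  define e where "e = -2 * b"
  have "e < -1"
    using assms by (simp add: e_def)
  have right_tail: "(\<integral>\<^sup>+s. ennreal (s powr e) * indicator {1..} s \<partial>lborel)
      = ennreal (- (1 powr (e + 1)) / (e + 1))"
    by (rule nn_integral_has_integral_lebesgue'[OF _ has_integral_powr_to_inf[OF \<open>e < -1\<close>]]) auto
  have left_tail: "(\<integral>\<^sup>+s. ennreal ((-s) powr e) * indicator {..-1} s \<partial>lborel)
      = (\<integral>\<^sup>+s. ennreal (s powr e) * indicator {1..} s \<partial>lborel)"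
    using nn_integral_real_affine[of "\<lambda>s. ennreal ((-s) powr e) * indicator {..-1} s" "-1" 0]
    by (simp add: indicator_def)
  have split: "ennreal (japanese_weight b s) \<le> indicator {-1..1} s
      + ennreal (s powr e) * indicator {1..} s + ennreal ((-s) powr e) * indicator {..-1} s" for s
  proof (cases "\<bar>s\<bar> \<le> 1")
    case True
    then show ?thesis
      using japanese_weight_le_1[of b s] assms by (auto simp: indicator_def intro: order.trans[of _ 1])
  next
    case False
    then have "japanese_weight b s \<le> \<bar>s\<bar> powr e"
      using japanese_weight_le_abs_powr[of b s] assms by (simp add: e_def)
    with False show ?thesis
      by (auto simp: indicator_def abs_if split: if_splits)
  qed
  have "(\<integral>\<^sup>+s. japanese_weight b s \<partial>lborel) \<le> (\<integral>\<^sup>+s. indicator {-1..1} s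
      + ennreal (s powr e) * indicator {1..} s + ennreal ((-s) powr e) * indicator {..-1} s \<partial>lborel)"
    by (intro nn_integral_mono split)
  also have "\<dots> = emeasure lborel {-1..1::real} + ennreal (- (1 powr (e + 1)) / (e + 1))
      + ennreal (- (1 powr (e + 1)) / (e + 1))"
    by (simp add: nn_integral_add left_tail right_tail)
  also have "\<dots> < \<infinity>"
    by (simp add: less_top[symmetric])
  finally show ?thesis .
qed

section \<open>The resonance integral\<close>

lemma nn_integral_square_substitution_le:
  fixes h :: "real \<Rightarrow> real"
  assumes "continuous_on UNIV h" and h_nonneg: "\<And>u. 0 \<le> h u"
  shows "(\<integral>\<^sup>+s. ennreal (2 * s * h (s\<^sup>2) * indicator {0..} s) \<partial>lborel) \<le> (\<integral>\<^sup>+u. h u \<partial>lborel)"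
proof -
  have [measurable]: "h \<in> borel_measurable borel"
    using assms(1) by (rule borel_measurable_continuous_onI)
  define f where "f i s = ennreal (2 * s * h (s\<^sup>2) * indicator {0..real i} s)" for i :: nat and s
  have "incseq f"
    by (auto simp: incseq_def le_fun_def f_def h_nonneg split: split_indicator intro!: ennreal_leI)
  have sup_f: "(SUP i. f i s) = ennreal (2 * s * h (s\<^sup>2) * indicator {0..} s)" for s
  proof (rule LIMSEQ_unique[OF LIMSEQ_SUP])
    show "incseq (\<lambda>i. f i s)"
      using \<open>incseq f\<close> by (auto simp: incseq_def le_fun_def)
    obtain n where "s < real n"
      using reals_Archimedean2 by blast
    then have "\<forall>\<^sub>F i in sequentially. f i s = ennreal (2 * s * h (s\<^sup>2) * indicator {0..} s)"
      by (auto simp: f_def frequently_def intro!: eventually_sequentiallyI[of n] split: split_indicator)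
    then show "(\<lambda>i. f i s) \<longlonglongrightarrow> ennreal (2 * s * h (s\<^sup>2) * indicator {0..} s)"
      by (rule tendsto_eventually)
  qed
  have bounded: "(\<integral>\<^sup>+s. f i s \<partial>lborel) \<le> (\<integral>\<^sup>+u. h u \<partial>lborel)" for i
  proof -
    have "(\<integral>\<^sup>+s. f i s \<partial>lborel) = (\<integral>\<^sup>+s. ennreal (h (s\<^sup>2) * (2 * s) * indicator {0..real i} s) \<partial>lborel)"
      by (simp add: f_def mult_ac)
    also have "\<dots> = (\<integral>\<^sup>+u. ennreal (h u * indicator {0\<^sup>2..(real i)\<^sup>2} u) \<partial>lborel)"
      by (rule nn_integral_substitution[symmetric, where g="\<lambda>x. x\<^sup>2" and g'="\<lambda>x. 2 * x"])
        (auto intro!: derivative_eq_intros continuous_intros simp: set_borel_measurable_def)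
    also have "\<dots> \<le> (\<integral>\<^sup>+u. h u \<partial>lborel)"
      by (intro nn_integral_mono ennreal_leI) (auto simp: h_nonneg indicator_def)
    finally show ?thesis .
  qed
  have "(\<integral>\<^sup>+s. ennreal (2 * s * h (s\<^sup>2) * indicator {0..} s) \<partial>lborel) = (SUP i. \<integral>\<^sup>+s. f i s \<partial>lborel)"
    unfolding sup_f[symmetric]
    by (rule nn_integral_monotone_convergence_SUP[OF \<open>incseq f\<close>]) (unfold f_def, measurable)
  also have "\<dots> \<le> (\<integral>\<^sup>+u. h u \<partial>lborel)"
    by (rule SUP_least) (rule bounded)
  finally show ?thesis .
qed

lemma nn_integral_abs_square_substitution_le:
  fixes h :: "real \<Rightarrow> real"
  assumes "continuous_on UNIV h" and h_nonneg: "\<And>u. 0 \<le> h u"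
  shows "(\<integral>\<^sup>+s. ennreal (\<bar>s\<bar> * h (s\<^sup>2)) \<partial>lborel) \<le> (\<integral>\<^sup>+u. h u \<partial>lborel)"
proof -
  have [measurable]: "h \<in> borel_measurable borel"
    using assms(1) by (rule borel_measurable_continuous_onI)
  define half where "half = (\<integral>\<^sup>+s. ennreal (s * h (s\<^sup>2) * indicator {0..} s) \<partial>lborel)"
  have "(\<integral>\<^sup>+s. ennreal (\<bar>s\<bar> * h (s\<^sup>2)) \<partial>lborel)
      \<le> (\<integral>\<^sup>+s. ennreal (s * h (s\<^sup>2) * indicator {0..} s)
             + ennreal ((-s) * h ((-s)\<^sup>2) * indicator {0..} (-s)) \<partial>lborel)"
    by (intro nn_integral_mono) (auto simp: indicator_def h_nonneg intro!: ennreal_leI)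
  also have "\<dots> = half + (\<integral>\<^sup>+s. ennreal ((-s) * h ((-s)\<^sup>2) * indicator {0..} (-s)) \<partial>lborel)"
    unfolding half_def by (rule nn_integral_add) auto
  also have "(\<integral>\<^sup>+s. ennreal ((-s) * h ((-s)\<^sup>2) * indicator {0..} (-s)) \<partial>lborel) = half"
    unfolding half_def by (subst nn_integral_real_affine[where c="-1" and t=0]) auto
  also have "half + half = (\<integral>\<^sup>+s. 2 * ennreal (s * h (s\<^sup>2) * indicator {0..} s) \<partial>lborel)"
    unfolding half_def mult_2[symmetric] by (rule nn_integral_cmult[symmetric]) simp
  also have "\<dots> = (\<integral>\<^sup>+s. ennreal (2 * s * h (s\<^sup>2) * indicator {0..} s) \<partial>lborel)"
    by (intro nn_integral_cong) (simp add: ennreal_mult' mult.assoc)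
  also have "\<dots> \<le> (\<integral>\<^sup>+u. h u \<partial>lborel)"
    by (intro nn_integral_square_substitution_le assms)
  finally show ?thesis .
qed

text \<open>The resonance x^3 + (\<xi> - x)^3 = \<xi>^3/4 + 3\<xi>(x - \<xi>/2)^2 is quadratic in x - \<xi>/2, and the
  Jacobian of u = (x - \<xi>/2)^2 cancels the weight \<bar>\<xi>\<bar> \<bar>2x - \<xi>\<bar>.\<close>
lemma resonance_integral_le:
  fixes \<xi> E b :: real
  shows "(\<integral>\<^sup>+x. ennreal (\<bar>\<xi>\<bar> * \<bar>2 * x - \<xi>\<bar> * japanese_weight b (E - x^3 - (\<xi> - x)^3)) \<partial>lborel)
    \<le> ennreal (2/3) * (\<integral>\<^sup>+s. japanese_weight b s \<partial>lborel)"
proof (cases "\<xi> = 0")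
  case True
  then show ?thesis by simp
next
  case False
  define E' where "E' = E - \<xi>^3 / 4"
  define h where "h u = 3 * \<bar>\<xi>\<bar> * japanese_weight b (E' - 3 * \<xi> * u)" for u
  have h_cont: "continuous_on UNIV h"
    unfolding h_def by (intro continuous_intros)
  have h_nonneg: "0 \<le> h u" for u
    unfolding h_def by (simp add: japanese_weight_nonneg)
  have [measurable]: "h \<in> borel_measurable borel"
    using h_cont by (rule borel_measurable_continuous_onI)
  have resonance: "E - (\<xi>/2 + 1 * s)^3 - (\<xi> - (\<xi>/2 + 1 * s))^3 = E' - 3 * \<xi> * s\<^sup>2" for s
    unfolding E'_def by (simp add: power3_eq_cube power2_eq_square field_simps)
  have "(\<integral>\<^sup>+x. ennreal (\<bar>\<xi>\<bar> * \<bar>2 * x - \<xi>\<bar> * japanese_weight b (E - x^3 - (\<xi> - x)^3)) \<partial>lborel)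
      = (\<integral>\<^sup>+s. ennreal (\<bar>\<xi>\<bar> * \<bar>2 * (\<xi>/2 + 1 * s) - \<xi>\<bar>
          * japanese_weight b (E - (\<xi>/2 + 1 * s)^3 - (\<xi> - (\<xi>/2 + 1 * s))^3)) \<partial>lborel)"
    by (subst nn_integral_real_affine[where c=1 and t="\<xi>/2"]) auto
  also have "\<dots> = (\<integral>\<^sup>+s. ennreal (2/3) * ennreal (\<bar>s\<bar> * h (s\<^sup>2)) \<partial>lborel)"
    by (intro nn_integral_cong)
      (simp only: resonance, simp add: h_def abs_mult japanese_weight_nonneg flip: ennreal_mult)
  also have "\<dots> = ennreal (2/3) * (\<integral>\<^sup>+s. ennreal (\<bar>s\<bar> * h (s\<^sup>2)) \<partial>lborel)"
    by (rule nn_integral_cmult) measurable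
  also have "(\<integral>\<^sup>+s. ennreal (\<bar>s\<bar> * h (s\<^sup>2)) \<partial>lborel) \<le> (\<integral>\<^sup>+u. h u \<partial>lborel)"
    by (rule nn_integral_abs_square_substitution_le[OF h_cont h_nonneg])
  also have "(\<integral>\<^sup>+u. h u \<partial>lborel) = (\<integral>\<^sup>+s. japanese_weight b s \<partial>lborel)"
  proof -
    have "(\<integral>\<^sup>+s. japanese_weight b s \<partial>lborel)
        = ennreal (3 * \<bar>\<xi>\<bar>) * (\<integral>\<^sup>+u. japanese_weight b (E' + (-3 * \<xi>) * u) \<partial>lborel)"
      using False nn_integral_real_affine[of "\<lambda>s. ennreal (japanese_weight b s)" "-3 * \<xi>" E']
      by (simp add: abs_mult)
    also have "\<dots> = (\<integral>\<^sup>+u. h u \<partial>lborel)"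
      by (subst nn_integral_cmult[symmetric])
        (auto simp: h_def ennreal_mult japanese_weight_nonneg intro!: nn_integral_cong)
    finally show ?thesis ..
  qed
  finally show ?thesis
    by (simp add: mult_left_mono)
qed

definition kernel_constant :: "real \<Rightarrow> ennreal" where
  "kernel_constant b = ennreal (2/3) * (\<integral>\<^sup>+s. japanese_weight b s \<partial>lborel)^2"

lemma kernel_constant_finite: "b > 1/2 \<Longrightarrow> kernel_constant b < \<infinity>"
  using nn_integral_japanese_weight_finite[of b] unfolding kernel_constant_def
  by (simp add: ennreal_mult_less_top power_less_top_ennreal)

lemma resonance_double_integral_le:
  fixes \<tau> \<xi> \<eta> \<eta>1 b :: real
  shows "(\<integral>\<^sup>+\<xi>1. \<integral>\<^sup>+\<tau>1. ennreal (\<bar>\<xi>\<bar> * \<bar>2 * \<xi>1 - \<xi>\<bar> * japanese_weight b (\<tau>1 - \<xi>1^3 - \<eta>1^3)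
      * japanese_weight b ((\<tau> - \<tau>1) - (\<xi> - \<xi>1)^3 - (\<eta> - \<eta>1)^3)) \<partial>lborel \<partial>lborel)
    \<le> kernel_constant b"
proof -
  define P where "P = \<tau> - \<eta>1^3 - (\<eta> - \<eta>1)^3"
  define \<Phi> where "\<Phi> = (\<integral>\<^sup>+s. japanese_weight b s \<partial>lborel)"
  define R where "R t \<xi>1 = ennreal (\<bar>\<xi>\<bar> * \<bar>2 * \<xi>1 - \<xi>\<bar> * japanese_weight b ((P - t) - \<xi>1^3 - (\<xi> - \<xi>1)^3))"
    for t \<xi>1
  have "(\<integral>\<^sup>+\<xi>1. \<integral>\<^sup>+\<tau>1. ennreal (\<bar>\<xi>\<bar> * \<bar>2 * \<xi>1 - \<xi>\<bar> * japanese_weight b (\<tau>1 - \<xi>1^3 - \<eta>1^3)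
      * japanese_weight b ((\<tau> - \<tau>1) - (\<xi> - \<xi>1)^3 - (\<eta> - \<eta>1)^3)) \<partial>lborel \<partial>lborel)
    = (\<integral>\<^sup>+\<xi>1. \<integral>\<^sup>+t. japanese_weight b t * R t \<xi>1 \<partial>lborel \<partial>lborel)"
  proof (rule nn_integral_cong)
    fix \<xi>1 :: real
    show "(\<integral>\<^sup>+\<tau>1. ennreal (\<bar>\<xi>\<bar> * \<bar>2 * \<xi>1 - \<xi>\<bar> * japanese_weight b (\<tau>1 - \<xi>1^3 - \<eta>1^3)
        * japanese_weight b ((\<tau> - \<tau>1) - (\<xi> - \<xi>1)^3 - (\<eta> - \<eta>1)^3)) \<partial>lborel)
      = (\<integral>\<^sup>+t. japanese_weight b t * R t \<xi>1 \<partial>lborel)"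
      by (subst nn_integral_real_affine[where c=1 and t="\<xi>1^3 + \<eta>1^3"])
        (auto simp: P_def R_def algebra_simps japanese_weight_nonneg ennreal_mult[symmetric]
          intro!: nn_integral_cong)
  qed
  also have "\<dots> = (\<integral>\<^sup>+t. \<integral>\<^sup>+\<xi>1. japanese_weight b t * R t \<xi>1 \<partial>lborel \<partial>lborel)"
    by (rule nn_integral_lborel_swap) (unfold R_def, measurable)
  also have "\<dots> = (\<integral>\<^sup>+t. japanese_weight b t * (\<integral>\<^sup>+\<xi>1. R t \<xi>1 \<partial>lborel) \<partial>lborel)"
    by (intro nn_integral_cong nn_integral_cmult) (unfold R_def, measurable)
  also have "\<dots> \<le> (\<integral>\<^sup>+t. japanese_weight b t * (ennreal (2/3) * \<Phi>) \<partial>lborel)"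
    unfolding R_def \<Phi>_def by (intro nn_integral_mono mult_left_mono resonance_integral_le) auto
  also have "\<dots> = ennreal (2/3) * \<Phi>^2"
    by (subst nn_integral_multc) (auto simp: \<Phi>_def power2_eq_square mult_ac)
  finally show ?thesis
    unfolding kernel_constant_def \<Phi>_def .
qed

section \<open>The kernel of the bilinear form\<close>

lemma borel_measurable_kdv_sym [measurable]: "kdv_sym \<in> borel_measurable borel"
  unfolding kdv_sym_def by measurable

lemma borel_measurable_japanese [measurable]: "japanese \<in> borel_measurable borel"
  unfolding japanese_def by measurable

definition Xsb_density :: "real \<Rightarrow> (real \<times> real \<times> real \<Rightarrow> complex) \<Rightarrow> real \<times> real \<times> real \<Rightarrow> real" where
  "Xsb_density b f w = japanese (kdv_sym w) powr b * cmod (f w)"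

definition bil_kernel :: "real \<Rightarrow> real \<times> real \<times> real \<Rightarrow> real \<times> real \<times> real \<Rightarrow> real" where
  "bil_kernel b w w1 = sqrt \<bar>fst (snd w)\<bar> * sqrt \<bar>2 * fst (snd w1) - fst (snd w)\<bar>
     * sqrt (japanese_weight b (kdv_sym w1)) * sqrt (japanese_weight b (kdv_sym (w - w1)))"

lemma Xsb_density_nonneg: "0 \<le> Xsb_density b f w"
  unfolding Xsb_density_def by simp

lemma borel_measurable_Xsb_density [measurable]:
  "f \<in> borel_measurable borel \<Longrightarrow> Xsb_density b f \<in> borel_measurable borel"
  unfolding Xsb_density_def by measurable

lemma Xsb_norm_sq_eq_nn_integral_Xsb_density:
  "Xsb_norm_sq b f = (\<integral>\<^sup>+w. ennreal ((Xsb_density b f w)\<^sup>2) \<partial>lborel)"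
  unfolding Xsb_norm_sq_def Xsb_density_def by (simp add: power_mult_distrib)

lemma bil_kernel_nonneg: "0 \<le> bil_kernel b w w1"
  unfolding bil_kernel_def by (simp add: japanese_weight_nonneg)

lemma borel_measurable_bil_kernel [measurable]: "bil_kernel b w \<in> borel_measurable borel"
  unfolding bil_kernel_def by measurable

lemma norm_bil_integrand:
  "cmod (bil_integrand f g w w1) = bil_kernel b w w1 * Xsb_density b f w1 * Xsb_density b g (w - w1)"
proof -
  have "cmod (f v) = sqrt (japanese_weight b (kdv_sym v)) * Xsb_density b f v" for f and v
    unfolding Xsb_density_def
    by (simp add: mult.assoc[symmetric] sqrt_japanese_weight_mult_japanese_powr)
  moreover have "fst (snd w1) - (fst (snd w) - fst (snd w1)) = 2 * fst (snd w1) - fst (snd w)"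
    by simp
  ultimately show ?thesis
    unfolding bil_integrand_def bil_kernel_def by (simp add: norm_mult abs_mult mult_ac)
qed

lemma nn_integral_bil_kernel_sq_slice_le:
  "(\<integral>\<^sup>+x. \<integral>\<^sup>+t. ennreal ((bil_kernel b w (t, x, e))\<^sup>2) \<partial>lborel \<partial>lborel)
    \<le> kernel_constant b"
proof -
  obtain \<tau> \<xi> \<eta> where w: "w = (\<tau>, \<xi>, \<eta>)"
    by (cases w) auto
  have "(bil_kernel b w (t, x, e))\<^sup>2 = \<bar>\<xi>\<bar> * \<bar>2 * x - \<xi>\<bar> * japanese_weight b (t - x^3 - e^3)
      * japanese_weight b ((\<tau> - t) - (\<xi> - x)^3 - (\<eta> - e)^3)" for t x
    unfolding bil_kernel_def w kdv_sym_def
    by (simp add: power_mult_distrib japanese_weight_nonneg)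
  then show ?thesis
    using resonance_double_integral_le[of \<xi> b e \<tau> \<eta>] by simp
qed

lemma nn_integral_bil_kernel_sq_le:
  fixes c :: "real \<Rightarrow> real"
  assumes [measurable]: "c \<in> borel_measurable borel" and c_nonneg: "\<And>e. 0 \<le> c e"
  shows "(\<integral>\<^sup>+w1. ennreal (c (snd (snd w1)) * (bil_kernel b w w1)\<^sup>2) \<partial>lborel)
    \<le> kernel_constant b * (\<integral>\<^sup>+e. c e \<partial>lborel)"
proof -
  have "(\<integral>\<^sup>+w1. ennreal (c (snd (snd w1)) * (bil_kernel b w w1)\<^sup>2) \<partial>lborel)
      = (\<integral>\<^sup>+e. \<integral>\<^sup>+x. \<integral>\<^sup>+t. c e * ennreal ((bil_kernel b w (t, x, e))\<^sup>2) \<partial>lborel \<partial>lborel \<partial>lborel)"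
    by (subst nn_integral_lborel_triple) (auto simp: c_nonneg ennreal_mult)
  also have "\<dots> = (\<integral>\<^sup>+e. c e * (\<integral>\<^sup>+x. \<integral>\<^sup>+t. ennreal ((bil_kernel b w (t, x, e))\<^sup>2) \<partial>lborel \<partial>lborel) \<partial>lborel)"
    by (intro nn_integral_cong) (simp add: nn_integral_cmult)
  also have "\<dots> \<le> (\<integral>\<^sup>+e. c e * kernel_constant b \<partial>lborel)"
    by (intro nn_integral_mono mult_left_mono nn_integral_bil_kernel_sq_slice_le) simp
  also have "\<dots> = kernel_constant b * (\<integral>\<^sup>+e. c e \<partial>lborel)"
    by (subst nn_integral_multc) (auto simp: mult.commute)
  finally show ?thesis .
qed

section \<open>Cauchy-Schwarz estimates for the kernel\<close>

lemma Cauchy_Schwarz_nn_integral_AE_factor: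
  fixes h u v :: "'a \<Rightarrow> real"
  assumes [measurable]: "u \<in> borel_measurable M" "v \<in> borel_measurable M"
    and "\<And>x. 0 \<le> u x" "\<And>x. 0 \<le> v x"
    and "AE x in M. h x = u x * v x"
  shows "(\<integral>\<^sup>+x. h x \<partial>M)\<^sup>2 \<le> (\<integral>\<^sup>+x. ennreal ((u x)\<^sup>2) \<partial>M) * (\<integral>\<^sup>+x. ennreal ((v x)\<^sup>2) \<partial>M)"
proof -
  have "(\<integral>\<^sup>+x. h x \<partial>M) = (\<integral>\<^sup>+x. ennreal (u x) * ennreal (v x) \<partial>M)"
    by (rule nn_integral_cong_AE) (use assms in \<open>auto simp: ennreal_mult\<close>)
  also have "(\<dots>)\<^sup>2 \<le> (\<integral>\<^sup>+x. ennreal (u x) ^ 2 \<partial>M) * (\<integral>\<^sup>+x. ennreal (v x) ^ 2 \<partial>M)"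
    by (rule Cauchy_Schwarz_nn_integral) auto
  finally show ?thesis
    using assms by (simp add: ennreal_power)
qed

lemma bil_kernel_Cauchy_Schwarz:
  fixes F G :: "real \<times> real \<times> real \<Rightarrow> real" and ch \<rho> :: "real \<Rightarrow> real"
  assumes [measurable]: "F \<in> borel_measurable borel" "G \<in> borel_measurable borel"
    "ch \<in> borel_measurable borel" "\<rho> \<in> borel_measurable borel"
    and F_nonneg: "\<And>w. 0 \<le> F w" and G_nonneg: "\<And>w. 0 \<le> G w"
    and ch_nonneg: "\<And>e. 0 \<le> ch e" and \<rho>_nonneg: "\<And>e. 0 \<le> \<rho> e"
    and \<rho>_pos: "AE w1 in lborel. ch (snd (snd w1)) * F w1 * G (w - w1) \<noteq> 0 \<longrightarrow> 0 < \<rho> (snd (snd w1))"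
  shows "(\<integral>\<^sup>+w1. ennreal (ch (snd (snd w1)) * bil_kernel b w w1 * F w1 * G (w - w1)) \<partial>lborel)\<^sup>2
    \<le> kernel_constant b * (\<integral>\<^sup>+e. ennreal ((ch e)\<^sup>2 * \<rho> e) \<partial>lborel)
      * (\<integral>\<^sup>+w1. ennreal ((F w1)\<^sup>2 * (G (w - w1))\<^sup>2 / \<rho> (snd (snd w1))) \<partial>lborel)"
proof -
  let ?u = "\<lambda>w1. ch (snd (snd w1)) * bil_kernel b w w1 * sqrt (\<rho> (snd (snd w1)))"
  let ?v = "\<lambda>w1. F w1 * G (w - w1) / sqrt (\<rho> (snd (snd w1)))"
  have "(\<integral>\<^sup>+w1. ennreal (ch (snd (snd w1)) * bil_kernel b w w1 * F w1 * G (w - w1)) \<partial>lborel)\<^sup>2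
      \<le> (\<integral>\<^sup>+w1. ennreal ((?u w1)\<^sup>2) \<partial>lborel) * (\<integral>\<^sup>+w1. ennreal ((?v w1)\<^sup>2) \<partial>lborel)"
    by (rule Cauchy_Schwarz_nn_integral_AE_factor)
      (use \<rho>_pos in \<open>auto simp: F_nonneg G_nonneg ch_nonneg \<rho>_nonneg bil_kernel_nonneg
        elim!: eventually_mono\<close>)
  also have "(\<integral>\<^sup>+w1. ennreal ((?u w1)\<^sup>2) \<partial>lborel)
      = (\<integral>\<^sup>+w1. ennreal (((ch (snd (snd w1)))\<^sup>2 * \<rho> (snd (snd w1))) * (bil_kernel b w w1)\<^sup>2) \<partial>lborel)"
    by (intro nn_integral_cong) (simp add: power_mult_distrib \<rho>_nonneg mult_ac)
  also have "\<dots> \<le> kernel_constant b * (\<integral>\<^sup>+e. ennreal ((ch e)\<^sup>2 * \<rho> e) \<partial>lborel)"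
    by (rule nn_integral_bil_kernel_sq_le) (auto simp: \<rho>_nonneg)
  also have "(\<integral>\<^sup>+w1. ennreal ((?v w1)\<^sup>2) \<partial>lborel)
      = (\<integral>\<^sup>+w1. ennreal ((F w1)\<^sup>2 * (G (w - w1))\<^sup>2 / \<rho> (snd (snd w1))) \<partial>lborel)"
    by (intro nn_integral_cong) (simp add: power_mult_distrib power_divide \<rho>_nonneg)
  finally show ?thesis
    by (simp add: mult_right_mono)
qed

lemma bil_kernel_L2_bound_input_cutoff:
  fixes F G :: "real \<times> real \<times> real \<Rightarrow> real" and ch :: "real \<times> real \<times> real \<Rightarrow> real \<Rightarrow> real"
  assumes [measurable]: "F \<in> borel_measurable borel" "G \<in> borel_measurable borel"
    "\<And>w. ch w \<in> borel_measurable borel"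
    and F_nonneg: "\<And>w. 0 \<le> F w" and G_nonneg: "\<And>w. 0 \<le> G w"
    and ch_nonneg: "\<And>w e. 0 \<le> ch w e" and ch_L2: "\<And>w. (\<integral>\<^sup>+e. ennreal ((ch w e)\<^sup>2) \<partial>lborel) \<le> B"
  shows "(\<integral>\<^sup>+w. (\<integral>\<^sup>+w1. ennreal (ch w (snd (snd w1)) * bil_kernel b w w1 * F w1 * G (w - w1)) \<partial>lborel)\<^sup>2 \<partial>lborel)
    \<le> kernel_constant b * B * ((\<integral>\<^sup>+w. ennreal ((F w)\<^sup>2) \<partial>lborel) * (\<integral>\<^sup>+w. ennreal ((G w)\<^sup>2) \<partial>lborel))"
proof -
  define S where "S w = (\<integral>\<^sup>+w1. ennreal ((F w1)\<^sup>2 * (G (w - w1))\<^sup>2) \<partial>lborel)" for w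
  have pointwise: "(\<integral>\<^sup>+w1. ennreal (ch w (snd (snd w1)) * bil_kernel b w w1 * F w1 * G (w - w1)) \<partial>lborel)\<^sup>2
      \<le> kernel_constant b * B * S w" for w
  proof -
    have "(\<integral>\<^sup>+w1. ennreal (ch w (snd (snd w1)) * bil_kernel b w w1 * F w1 * G (w - w1)) \<partial>lborel)\<^sup>2
        \<le> kernel_constant b * (\<integral>\<^sup>+e. ennreal ((ch w e)\<^sup>2 * 1) \<partial>lborel) * S w"
      unfolding S_def
      using bil_kernel_Cauchy_Schwarz[where \<rho>="\<lambda>_. 1" and ch="ch w" and F=F and G=G]
      by (simp add: F_nonneg G_nonneg ch_nonneg)
    also have "\<dots> \<le> kernel_constant b * B * S w"
      using ch_L2[of w] by (simp add: mult_right_mono mult_left_mono)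
    finally show ?thesis .
  qed
  have "(\<integral>\<^sup>+w. (\<integral>\<^sup>+w1. ennreal (ch w (snd (snd w1)) * bil_kernel b w w1 * F w1 * G (w - w1)) \<partial>lborel)\<^sup>2 \<partial>lborel)
      \<le> (\<integral>\<^sup>+w. kernel_constant b * B * S w \<partial>lborel)"
    by (intro nn_integral_mono pointwise)
  also have "\<dots> = kernel_constant b * B * (\<integral>\<^sup>+w. S w \<partial>lborel)"
    by (rule nn_integral_cmult) (unfold S_def, measurable)
  also have "(\<integral>\<^sup>+w. S w \<partial>lborel) = (\<integral>\<^sup>+w. ennreal ((F w)\<^sup>2) \<partial>lborel) * (\<integral>\<^sup>+w. ennreal ((G w)\<^sup>2) \<partial>lborel)"
    unfolding S_def using nn_integral_convolution_lborel[of "\<lambda>w. ennreal ((F w)\<^sup>2)" "\<lambda>w. ennreal ((G w)\<^sup>2)"]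
    by (simp add: ennreal_mult')
  finally show ?thesis .
qed

definition slice_mass :: "(real \<times> real \<times> real \<Rightarrow> real) \<Rightarrow> real \<Rightarrow> ennreal" where
  "slice_mass F e = (\<integral>\<^sup>+x. \<integral>\<^sup>+t. ennreal ((F (t, x, e))\<^sup>2) \<partial>lborel \<partial>lborel)"

lemma borel_measurable_slice_mass [measurable]:
  assumes [measurable]: "F \<in> borel_measurable borel"
  shows "slice_mass F \<in> borel_measurable borel"
  unfolding slice_mass_def by measurable

lemma nn_integral_slice_mass:
  assumes [measurable]: "F \<in> borel_measurable borel"
  shows "(\<integral>\<^sup>+e. slice_mass F e \<partial>lborel) = (\<integral>\<^sup>+w. ennreal ((F w)\<^sup>2) \<partial>lborel)"
  unfolding slice_mass_def by (subst nn_integral_lborel_triple) auto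

lemma AE_slice_mass_pos:
  assumes [measurable]: "F \<in> borel_measurable borel"
    and finite: "(\<integral>\<^sup>+w. ennreal ((F w)\<^sup>2) \<partial>lborel) < \<infinity>"
  shows "AE w in lborel. F w \<noteq> 0 \<longrightarrow> 0 < enn2real (slice_mass F (snd (snd w)))"
proof -
  define B where "B = {e. slice_mass F e = 0 \<or> slice_mass F e = \<infinity>}"
  have [measurable]: "B \<in> sets borel"
    unfolding B_def by measurable
  have "AE e in lborel. slice_mass F e \<noteq> \<infinity>"
    by (rule nn_integral_PInf_AE) (use finite nn_integral_slice_mass[of F] in auto)
  then have "(\<integral>\<^sup>+e. indicator B e * slice_mass F e \<partial>lborel) = 0"
    by (subst nn_integral_0_iff_AE) (auto simp: B_def elim!: eventually_mono)
  moreover have "(\<integral>\<^sup>+w. indicator B (snd (snd w)) * ennreal ((F w)\<^sup>2) \<partial>lborel)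
      = (\<integral>\<^sup>+e. indicator B e * slice_mass F e \<partial>lborel)"
    unfolding slice_mass_def by (subst nn_integral_lborel_triple) (auto simp: nn_integral_cmult)
  ultimately have "(\<integral>\<^sup>+w. indicator B (snd (snd w)) * ennreal ((F w)\<^sup>2) \<partial>lborel) = 0"
    by simp
  then have "AE w in lborel. indicator B (snd (snd w)) * ennreal ((F w)\<^sup>2) = 0"
    by (subst (asm) nn_integral_0_iff_AE) measurable
  then show ?thesis
  proof (rule eventually_mono, intro impI)
    fix w
    assume "indicator B (snd (snd w)) * ennreal ((F w)\<^sup>2) = 0" "F w \<noteq> 0"
    then have "snd (snd w) \<notin> B"
      by (auto simp: indicator_def)
    then show "0 < enn2real (slice_mass F (snd (snd w)))"
      unfolding B_def by (cases "slice_mass F (snd (snd w))") auto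
  qed
qed

text \<open>Where a slice has mass 0 or \<infinity>, enn2real gives 0 and the quotient is 0 by the convention
  x / 0 = 0; the bound holds regardless.\<close>

lemma nn_integral_divide_slice_mass_le:
  fixes F :: "real \<times> real \<times> real \<Rightarrow> real" and c :: "real \<Rightarrow> ennreal"
  assumes [measurable]: "F \<in> borel_measurable borel" "c \<in> borel_measurable borel"
  shows "(\<integral>\<^sup>+w. c (snd (snd w)) * ennreal ((F w)\<^sup>2 / enn2real (slice_mass F (snd (snd w)))) \<partial>lborel)
    \<le> (\<integral>\<^sup>+e. c e \<partial>lborel)"
proof -
  have ratio_le_1: "ennreal (1 / enn2real a) * a \<le> 1" for a :: ennreal
    by (cases a) (auto simp: ennreal_mult[symmetric])
  have "(\<integral>\<^sup>+w. c (snd (snd w)) * ennreal ((F w)\<^sup>2 / enn2real (slice_mass F (snd (snd w)))) \<partial>lborel)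
      = (\<integral>\<^sup>+e. \<integral>\<^sup>+x. \<integral>\<^sup>+t. (c e * ennreal (1 / enn2real (slice_mass F e))) * ennreal ((F (t, x, e))\<^sup>2)
          \<partial>lborel \<partial>lborel \<partial>lborel)"
    by (subst nn_integral_lborel_triple) (auto simp: ennreal_mult[symmetric] mult.assoc)
  also have "\<dots> = (\<integral>\<^sup>+e. c e * (ennreal (1 / enn2real (slice_mass F e)) * slice_mass F e) \<partial>lborel)"
    by (simp add: slice_mass_def nn_integral_cmult mult.assoc)
  also have "\<dots> \<le> (\<integral>\<^sup>+e. c e \<partial>lborel)"
    by (intro nn_integral_mono) (simp add: mult_left_le ratio_le_1)
  finally show ?thesis .
qed

lemma nn_integral_cutoff_convolution_divide_slice_mass_le:
  fixes F G :: "real \<times> real \<times> real \<Rightarrow> real" and R :: real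
  assumes [measurable]: "F \<in> borel_measurable borel" "G \<in> borel_measurable borel" and "0 \<le> R"
  shows "(\<integral>\<^sup>+w. indicator {-R..R} (snd (snd w)) *
      (\<integral>\<^sup>+w1. ennreal ((F w1)\<^sup>2 * (G (w - w1))\<^sup>2 / enn2real (slice_mass F (snd (snd w1)))) \<partial>lborel) \<partial>lborel)
    \<le> ennreal (2 * R) * (\<integral>\<^sup>+w. ennreal ((G w)\<^sup>2) \<partial>lborel)"
proof -
  define X where "X y = ennreal ((F y)\<^sup>2 / enn2real (slice_mass F (snd (snd y))))" for y
  define Y where "Y z = ennreal ((G z)\<^sup>2)" for z
  define h where "h y z = indicator {-R..R} (snd (snd y) + snd (snd z)) * X y * Y z" for y z
  have [measurable]: "X \<in> borel_measurable borel" "Y \<in> borel_measurable borel"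
    unfolding X_def Y_def by measurable
  have [measurable]: "case_prod h \<in> borel_measurable borel"
    unfolding h_def by measurable
  have "(\<integral>\<^sup>+w. indicator {-R..R} (snd (snd w)) *
      (\<integral>\<^sup>+w1. ennreal ((F w1)\<^sup>2 * (G (w - w1))\<^sup>2 / enn2real (slice_mass F (snd (snd w1)))) \<partial>lborel) \<partial>lborel)
      = (\<integral>\<^sup>+w. \<integral>\<^sup>+w1. h w1 (w - w1) \<partial>lborel \<partial>lborel)"
    by (intro nn_integral_cong, subst nn_integral_cmult[symmetric])
      (auto simp: h_def X_def Y_def ennreal_mult[symmetric] mult_ac intro!: nn_integral_cong)
  also have "\<dots> = (\<integral>\<^sup>+y. \<integral>\<^sup>+z. h y z \<partial>lborel \<partial>lborel)"
    by (rule nn_integral_lborel_shear) measurable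
  also have "\<dots> = (\<integral>\<^sup>+z. \<integral>\<^sup>+y. h y z \<partial>lborel \<partial>lborel)"
    by (rule nn_integral_lborel_swap) measurable
  also have "\<dots> = (\<integral>\<^sup>+z. Y z * (\<integral>\<^sup>+y. indicator {-R..R} (snd (snd y) + snd (snd z)) * X y \<partial>lborel) \<partial>lborel)"
    by (intro nn_integral_cong, subst nn_integral_cmult[symmetric]) (auto simp: h_def mult_ac)
  also have "\<dots> \<le> (\<integral>\<^sup>+z. Y z * (\<integral>\<^sup>+e. indicator {-R..R} (e + snd (snd z)) \<partial>lborel) \<partial>lborel)"
    unfolding X_def by (intro nn_integral_mono mult_left_mono nn_integral_divide_slice_mass_le) auto
  also have "\<dots> = ennreal (2 * R) * (\<integral>\<^sup>+w. ennreal ((G w)\<^sup>2) \<partial>lborel)"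
    using \<open>0 \<le> R\<close> by (simp add: nn_integral_indicator_interval Y_def mult.commute nn_integral_cmult)
  finally show ?thesis .
qed

lemma bil_kernel_L2_bound_output_cutoff:
  fixes F G :: "real \<times> real \<times> real \<Rightarrow> real" and R :: real
  assumes [measurable]: "F \<in> borel_measurable borel" "G \<in> borel_measurable borel"
    and F_nonneg: "\<And>w. 0 \<le> F w" and G_nonneg: "\<And>w. 0 \<le> G w"
    and F_finite: "(\<integral>\<^sup>+w. ennreal ((F w)\<^sup>2) \<partial>lborel) < \<infinity>" and "0 \<le> R"
  shows "(\<integral>\<^sup>+w. indicator {-R..R} (snd (snd w)) *
      (\<integral>\<^sup>+w1. ennreal (bil_kernel b w w1 * F w1 * G (w - w1)) \<partial>lborel)\<^sup>2 \<partial>lborel)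
    \<le> kernel_constant b * (\<integral>\<^sup>+w. ennreal ((F w)\<^sup>2) \<partial>lborel)
      * (ennreal (2 * R) * (\<integral>\<^sup>+w. ennreal ((G w)\<^sup>2) \<partial>lborel))"
proof -
  define a where "a e = enn2real (slice_mass F e)" for e
  define S where "S w = (\<integral>\<^sup>+w1. ennreal ((F w1)\<^sup>2 * (G (w - w1))\<^sup>2 / a (snd (snd w1))) \<partial>lborel)" for w
  have [measurable]: "a \<in> borel_measurable borel"
    unfolding a_def by measurable
  have a_pos: "AE w1 in lborel. F w1 \<noteq> 0 \<longrightarrow> 0 < a (snd (snd w1))"
    unfolding a_def using AE_slice_mass_pos[OF _ F_finite] by simp
  have a_integral: "(\<integral>\<^sup>+e. ennreal ((1::real)\<^sup>2 * a e) \<partial>lborel) \<le> (\<integral>\<^sup>+w. ennreal ((F w)\<^sup>2) \<partial>lborel)"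
  proof -
    have "(\<integral>\<^sup>+e. ennreal ((1::real)\<^sup>2 * a e) \<partial>lborel) \<le> (\<integral>\<^sup>+e. slice_mass F e \<partial>lborel)"
      unfolding a_def by (intro nn_integral_mono) (simp add: ennreal_enn2real_if)
    then show ?thesis
      by (simp add: nn_integral_slice_mass)
  qed
  have pointwise: "(\<integral>\<^sup>+w1. ennreal (bil_kernel b w w1 * F w1 * G (w - w1)) \<partial>lborel)\<^sup>2
      \<le> kernel_constant b * (\<integral>\<^sup>+w. ennreal ((F w)\<^sup>2) \<partial>lborel) * S w" for w
  proof -
    have "(\<integral>\<^sup>+w1. ennreal (bil_kernel b w w1 * F w1 * G (w - w1)) \<partial>lborel)\<^sup>2
        \<le> kernel_constant b * (\<integral>\<^sup>+e. ennreal ((1::real)\<^sup>2 * a e) \<partial>lborel) * S w"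
    proof -
      have "AE w1 in lborel. 1 * F w1 * G (w - w1) \<noteq> 0 \<longrightarrow> 0 < a (snd (snd w1))"
        using a_pos by eventually_elim simp
      then show ?thesis
        using bil_kernel_Cauchy_Schwarz[where ch="\<lambda>_. 1" and \<rho>=a and F=F and G=G and w=w and b=b]
        by (simp add: S_def F_nonneg G_nonneg a_def)
    qed
    also have "\<dots> \<le> kernel_constant b * (\<integral>\<^sup>+w. ennreal ((F w)\<^sup>2) \<partial>lborel) * S w"
      by (intro mult_right_mono mult_left_mono a_integral) auto
    finally show ?thesis .
  qed
  have "(\<integral>\<^sup>+w. indicator {-R..R} (snd (snd w)) *
      (\<integral>\<^sup>+w1. ennreal (bil_kernel b w w1 * F w1 * G (w - w1)) \<partial>lborel)\<^sup>2 \<partial>lborel)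
      \<le> (\<integral>\<^sup>+w. (kernel_constant b * (\<integral>\<^sup>+w. ennreal ((F w)\<^sup>2) \<partial>lborel)) *
          (indicator {-R..R} (snd (snd w)) * S w) \<partial>lborel)"
    by (intro nn_integral_mono) (use pointwise in \<open>auto simp: indicator_def\<close>)
  also have "\<dots> = kernel_constant b * (\<integral>\<^sup>+w. ennreal ((F w)\<^sup>2) \<partial>lborel) *
      (\<integral>\<^sup>+w. indicator {-R..R} (snd (snd w)) * S w \<partial>lborel)"
    by (rule nn_integral_cmult) (unfold S_def, measurable)
  also have "\<dots> \<le> kernel_constant b * (\<integral>\<^sup>+w. ennreal ((F w)\<^sup>2) \<partial>lborel)
      * (ennreal (2 * R) * (\<integral>\<^sup>+w. ennreal ((G w)\<^sup>2) \<partial>lborel))"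
    unfolding S_def a_def
    by (intro mult_left_mono nn_integral_cutoff_convolution_divide_slice_mass_le) (auto simp: \<open>0 \<le> R\<close>)
  finally show ?thesis .
qed

section \<open>Estimates for the bilinear form\<close>

definition bil_majorant ::
  "(real \<times> real \<times> real \<Rightarrow> complex) \<Rightarrow> (real \<times> real \<times> real \<Rightarrow> complex) \<Rightarrow> real \<times> real \<times> real \<Rightarrow> ennreal" where
  "bil_majorant f g w = (\<integral>\<^sup>+w1. cmod (bil_integrand f g w w1) \<partial>lborel)"

lemma borel_measurable_bil_integrand [measurable]:
  assumes [measurable]: "f \<in> borel_measurable borel" "g \<in> borel_measurable borel"
  shows "(\<lambda>(w, w1). bil_integrand f g w w1) \<in> borel_measurable borel"
  unfolding bil_integrand_def by (simp add: case_prod_beta') measurable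

lemma borel_measurable_bil_majorant [measurable]:
  assumes [measurable]: "f \<in> borel_measurable borel" "g \<in> borel_measurable borel"
  shows "bil_majorant f g \<in> borel_measurable borel"
proof -
  have "(\<lambda>(w, w1). ennreal (cmod (bil_integrand f g w w1))) \<in> borel_measurable borel"
    using borel_measurable_bil_integrand[OF assms] by (simp add: case_prod_beta') measurable
  then show ?thesis
    unfolding bil_majorant_def[abs_def] by measurable
qed

lemma norm_bil_le_bil_majorant: "ennreal (cmod (bil f g w)) \<le> bil_majorant f g w"
proof (cases "integrable lborel (bil_integrand f g w)")
  case True
  then show ?thesis
    unfolding bil_def bil_majorant_def by (rule integral_norm_bound_ennreal)
next
  case False
  then show ?thesis
    unfolding bil_def by (simp add: not_integrable_integral_eq)
qed

lemma L2_norm_sq_bil_le: "L2_norm_sq (bil f g) \<le> (\<integral>\<^sup>+w. (bil_majorant f g w)\<^sup>2 \<partial>lborel)"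
  unfolding L2_norm_sq_def
  by (intro nn_integral_mono) (simp add: ennreal_power[symmetric] norm_bil_le_bil_majorant power_mono)

lemma L2_norm_sq_Py_bil_le:
  "L2_norm_sq (Py k (bil f g))
    \<le> (\<integral>\<^sup>+w. indicator {-(2 powr k)..2 powr k} (snd (snd w)) * (bil_majorant f g w)\<^sup>2 \<partial>lborel)"
  unfolding L2_norm_sq_def Py_def
  by (intro nn_integral_mono)
    (auto simp: indicator_def abs_le_iff ennreal_power[symmetric] norm_bil_le_bil_majorant power_mono)

lemma bil_defined_if_locally_square_integrable:
  assumes [measurable]: "f \<in> borel_measurable borel" "g \<in> borel_measurable borel"
    and finite: "\<And>R::nat. (\<integral>\<^sup>+w. indicator {-R..R} (snd (snd w)) * (bil_majorant f g w)\<^sup>2 \<partial>lborel) < \<infinity>"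
  shows "bil_defined f g"
proof -
  have "AE w in lborel. indicator {-R..R} (snd (snd w)) * (bil_majorant f g w)\<^sup>2 \<noteq> \<infinity>" for R :: nat
    by (rule nn_integral_PInf_AE) (use finite[of R] in auto)
  then have "AE w in lborel. \<forall>R::nat. indicator {-R..R} (snd (snd w)) * (bil_majorant f g w)\<^sup>2 \<noteq> \<infinity>"
    by (simp add: AE_all_countable)
  then show ?thesis
    unfolding bil_defined_def
  proof eventually_elim
    case (elim w)
    obtain R :: nat where "\<bar>snd (snd w)\<bar> \<le> R"
      using real_arch_simple by blast
    with elim[rule_format, of R] have "bil_majorant f g w < \<infinity>"
      by (auto simp: indicator_def abs_le_iff less_top[symmetric] power_less_top_ennreal)
    moreover have "bil_integrand f g w \<in> borel_measurable lborel"
      unfolding bil_integrand_def by measurable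
    ultimately show "integrable lborel (bil_integrand f g w)"
      unfolding bil_majorant_def by (intro integrableI_bounded) auto
  qed
qed

lemma bil_estimate_if_majorant_bound:
  assumes [measurable]: "f \<in> borel_measurable borel" "g \<in> borel_measurable borel"
    and bound: "(\<integral>\<^sup>+w. (bil_majorant f g w)\<^sup>2 \<partial>lborel) \<le> T" and "T < \<infinity>"
  shows "bil_defined f g \<and> L2_norm_sq (bil f g) \<le> T"
proof
  have local: "(\<integral>\<^sup>+w. indicator {-R..R} (snd (snd w)) * (bil_majorant f g w)\<^sup>2 \<partial>lborel) \<le> T" for R :: real
    using bound by (elim order_trans[rotated], intro nn_integral_mono) (simp add: indicator_def)
  show "bil_defined f g"
    by (rule bil_defined_if_locally_square_integrable[OF assms(1,2)])
      (rule le_less_trans[OF local \<open>T < \<infinity>\<close>])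
  show "L2_norm_sq (bil f g) \<le> T"
    using L2_norm_sq_bil_le bound by (rule order_trans)
qed

lemma Py_bil_estimate_if_local_majorant_bound:
  assumes [measurable]: "f \<in> borel_measurable borel" "g \<in> borel_measurable borel"
    and bound: "\<And>R. 0 \<le> R \<Longrightarrow>
      (\<integral>\<^sup>+w. indicator {-R..R} (snd (snd w)) * (bil_majorant f g w)\<^sup>2 \<partial>lborel) \<le> B R"
    and finite: "\<And>R. B R < \<infinity>"
  shows "bil_defined f g \<and> L2_norm_sq (Py k (bil f g)) \<le> B (2 powr k)"
proof
  show "bil_defined f g"
    by (rule bil_defined_if_locally_square_integrable[OF assms(1,2)])
      (rule le_less_trans[OF bound finite], simp)
  show "L2_norm_sq (Py k (bil f g)) \<le> B (2 powr k)"
    using L2_norm_sq_Py_bil_le bound[of "2 powr k"] by (rule order_trans) simp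
qed

lemma Xsb_density_Py:
  "Xsb_density b (Py k f) w = indicator {-(2 powr k)..2 powr k} (snd (snd w)) * Xsb_density b f w"
  by (auto simp: Xsb_density_def Py_def indicator_def abs_le_iff)

lemma Xsb_norm_sq_eq_ennreal_Xsb_norm:
  assumes "in_X0b b f"
  shows "Xsb_norm_sq b f = ennreal ((Xsb_norm b f)\<^sup>2)"
  using assms unfolding in_X0b_def Xsb_norm_def by (simp add: ennreal_enn2real_if less_top)

lemma kernel_bound_finite:
  assumes "b > 1/2" "in_X0b b f" "in_X0b b g"
  shows "kernel_constant b * ennreal c * (Xsb_norm_sq b f * Xsb_norm_sq b g) < \<infinity>"
  using assms kernel_constant_finite by (simp add: Xsb_norm_sq_eq_ennreal_Xsb_norm ennreal_mult_less_top)

lemma bil_estimate_input_cutoff: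
  fixes ch :: "real \<times> real \<times> real \<Rightarrow> real \<Rightarrow> real"
  assumes "b > 1/2" "in_X0b b f" "in_X0b b g"
    and [measurable]: "F \<in> borel_measurable borel" "G \<in> borel_measurable borel"
      "\<And>w. ch w \<in> borel_measurable borel"
    and ch_nonneg: "\<And>w e. 0 \<le> ch w e"
    and ch_L2: "\<And>w. (\<integral>\<^sup>+e. ennreal ((ch w e)\<^sup>2) \<partial>lborel) \<le> ennreal (2 * R)"
    and factorization: "\<And>w w1. cmod (bil_integrand F G w w1)
      = ch w (snd (snd w1)) * bil_kernel b w w1 * Xsb_density b f w1 * Xsb_density b g (w - w1)"
  shows "bil_defined F G \<and> L2_norm_sq (bil F G)
    \<le> kernel_constant b * ennreal (2 * R) * (Xsb_norm_sq b f * Xsb_norm_sq b g)"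
proof (rule bil_estimate_if_majorant_bound)
  have [measurable]: "f \<in> borel_measurable borel" "g \<in> borel_measurable borel"
    using assms(2,3) unfolding in_X0b_def by auto
  show "(\<integral>\<^sup>+w. (bil_majorant F G w)\<^sup>2 \<partial>lborel)
    \<le> kernel_constant b * ennreal (2 * R) * (Xsb_norm_sq b f * Xsb_norm_sq b g)"
    unfolding bil_majorant_def factorization Xsb_norm_sq_eq_nn_integral_Xsb_density
    by (rule bil_kernel_L2_bound_input_cutoff) (auto simp: Xsb_density_nonneg ch_nonneg ch_L2)
  show "kernel_constant b * ennreal (2 * R) * (Xsb_norm_sq b f * Xsb_norm_sq b g) < \<infinity>"
    using assms(1-3) by (rule kernel_bound_finite)
qed measurable

lemma bil_estimate_Py_left:
  assumes "b > 1/2" "in_X0b b f" "in_X0b b g"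
  shows "bil_defined (Py k f) g \<and> L2_norm_sq (bil (Py k f) g)
    \<le> kernel_constant b * ennreal (2 * 2 powr k) * (Xsb_norm_sq b f * Xsb_norm_sq b g)"
proof (rule bil_estimate_input_cutoff[OF assms, where ch="\<lambda>_ e. indicator {-(2 powr k)..2 powr k} e"])
  have [measurable]: "f \<in> borel_measurable borel" "g \<in> borel_measurable borel"
    using assms(2,3) by (simp_all add: in_X0b_def)
  show "Py k f \<in> borel_measurable borel" "g \<in> borel_measurable borel"
    unfolding Py_def by measurable
qed (auto simp: nn_integral_indicator_interval norm_bil_integrand[where b=b] Xsb_density_Py)

lemma bil_estimate_Py_right:
  assumes "b > 1/2" "in_X0b b f" "in_X0b b g"
  shows "bil_defined f (Py k g) \<and> L2_norm_sq (bil f (Py k g))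
    \<le> kernel_constant b * ennreal (2 * 2 powr k) * (Xsb_norm_sq b f * Xsb_norm_sq b g)"
proof (rule bil_estimate_input_cutoff[OF assms,
    where ch="\<lambda>w e. indicator {-(2 powr k)..2 powr k} (snd (snd w) - e)"])
  have [measurable]: "f \<in> borel_measurable borel" "g \<in> borel_measurable borel"
    using assms(2,3) by (simp_all add: in_X0b_def)
  show "f \<in> borel_measurable borel" "Py k g \<in> borel_measurable borel"
    unfolding Py_def by measurable
qed (auto simp: nn_integral_indicator_interval norm_bil_integrand[where b=b] Xsb_density_Py mult_ac)

lemma bil_estimate_Py_output:
  assumes "b > 1/2" "in_X0b b f" "in_X0b b g"
  shows "bil_defined f g \<and> L2_norm_sq (Py k (bil f g))
    \<le> kernel_constant b * ennreal (2 * 2 powr k) * (Xsb_norm_sq b f * Xsb_norm_sq b g)"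
proof (rule Py_bil_estimate_if_local_majorant_bound
    [where B="\<lambda>R. kernel_constant b * ennreal (2 * R) * (Xsb_norm_sq b f * Xsb_norm_sq b g)"])
  show [measurable]: "f \<in> borel_measurable borel" "g \<in> borel_measurable borel"
    using assms unfolding in_X0b_def by auto
  fix R :: real
  assume "0 \<le> R"
  have "(\<integral>\<^sup>+w. ennreal ((Xsb_density b f w)\<^sup>2) \<partial>lborel) < \<infinity>"
    using assms unfolding in_X0b_def Xsb_norm_sq_eq_nn_integral_Xsb_density by simp
  then show "(\<integral>\<^sup>+w. indicator {-R..R} (snd (snd w)) * (bil_majorant f g w)\<^sup>2 \<partial>lborel)
    \<le> kernel_constant b * ennreal (2 * R) * (Xsb_norm_sq b f * Xsb_norm_sq b g)"
    using bil_kernel_L2_bound_output_cutoff[of "Xsb_density b f" "Xsb_density b g" R b] \<open>0 \<le> R\<close>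
    by (simp add: bil_majorant_def norm_bil_integrand[where b=b] Xsb_density_nonneg
        Xsb_norm_sq_eq_nn_integral_Xsb_density mult_ac)
next
  show "kernel_constant b * ennreal (2 * R) * (Xsb_norm_sq b f * Xsb_norm_sq b g) < \<infinity>" for R
    using assms by (rule kernel_bound_finite)
qed

definition bilinear_constant :: "real \<Rightarrow> real" where
  "bilinear_constant b = sqrt (2 * enn2real (kernel_constant b)) + 1"

lemma bilinear_constant_pos: "0 < bilinear_constant b"
  unfolding bilinear_constant_def by (simp add: add_nonneg_pos)

lemma kernel_bound_le_bilinear_constant:
  assumes "b > 1/2" "in_X0b b f" "in_X0b b g"
  shows "kernel_constant b * ennreal (2 * 2 powr k) * (Xsb_norm_sq b f * Xsb_norm_sq b g)
    \<le> ennreal ((bilinear_constant b * 2 powr (k / 2) * Xsb_norm b f * Xsb_norm b g)\<^sup>2)"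
proof -
  define \<kappa> where "\<kappa> = enn2real (kernel_constant b)"
  define C where "C = bilinear_constant b"
  define X where "X = 2 powr k * (Xsb_norm b f)\<^sup>2 * (Xsb_norm b g)\<^sup>2"
  have "kernel_constant b = ennreal \<kappa>" and "0 \<le> \<kappa>"
    using kernel_constant_finite[OF assms(1)] by (simp_all add: \<kappa>_def ennreal_enn2real_if less_top)
  have "2 * \<kappa> = (sqrt (2 * \<kappa>))\<^sup>2"
    using \<open>0 \<le> \<kappa>\<close> by simp
  also have "\<dots> \<le> C\<^sup>2"
    unfolding C_def bilinear_constant_def \<kappa>_def by (intro power_mono) auto
  finally have "2 * \<kappa> \<le> C\<^sup>2" .
  have "kernel_constant b * ennreal (2 * 2 powr k) * (Xsb_norm_sq b f * Xsb_norm_sq b g)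
      = ennreal ((2 * \<kappa>) * X)"
    using assms(2,3) \<open>kernel_constant b = ennreal \<kappa>\<close> \<open>0 \<le> \<kappa>\<close>
    by (simp add: X_def Xsb_norm_sq_eq_ennreal_Xsb_norm ennreal_mult[symmetric] mult_ac)
  also have "\<dots> \<le> ennreal (C\<^sup>2 * X)"
    using \<open>2 * \<kappa> \<le> C\<^sup>2\<close> by (intro ennreal_leI mult_right_mono) (simp_all add: X_def)
  also have "C\<^sup>2 * X = (C * 2 powr (k / 2) * Xsb_norm b f * Xsb_norm b g)\<^sup>2"
    by (simp add: X_def power_mult_distrib power2_eq_square powr_add[symmetric])
  finally show ?thesis
    unfolding C_def .
qed

theorem proposition2p4:
  fixes b :: real
  assumes "b > 1/2"
  shows "\<exists>C>0. \<forall>(k::int) f g. in_X0b b f \<and> in_X0b b g \<longrightarrow>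
     (bil_defined (Py k f) g \<and>
      L2_norm_sq (bil (Py k f) g) \<le> ennreal ((C * 2 powr (real_of_int k / 2) * Xsb_norm b f * Xsb_norm b g)\<^sup>2)) \<and>
     (bil_defined f (Py k g) \<and>
      L2_norm_sq (bil f (Py k g)) \<le> ennreal ((C * 2 powr (real_of_int k / 2) * Xsb_norm b f * Xsb_norm b g)\<^sup>2)) \<and>
     (bil_defined f g \<and>
      L2_norm_sq (Py k (bil f g)) \<le> ennreal ((C * 2 powr (real_of_int k / 2) * Xsb_norm b f * Xsb_norm b g)\<^sup>2))"
  using bilinear_constant_pos kernel_bound_le_bilinear_constant[OF assms]
    bil_estimate_Py_left[OF assms] bil_estimate_Py_right[OF assms] bil_estimate_Py_output[OF assms]
  by (meson order_trans)

end
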